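(* Let $m\ge1$. For any $x=(x_0,\dots,x_m)\in\mathbb{R}^{m+1}$, $$\sum_{i=0}^{2m}(x*x)_i=\Big(\sum_{i=0}^{m}x_i\Big)^2.$$ Moreover, if $y\in\mathbb{R}^{2m+1}_+$ and $x^\star\in\mathbb{R}^{m+1}_+$ is a minimizer of $x\mapsto\mathcal{I}(y\|x*x)$ over $\mathbb{R}^{m+1}_+$, then $$\sum_{i=0}^{2m}(x^\star*x^\star)_i=\Big(\sum_{i=0}^{m}x^\star_i\Big)^2=\sum_{i=0}^{2m}y_i.$$
   Context: For $x\in\mathbb{R}^{m+1}$ set $x_k=0$ for $k<0$ and $k>m$, and $(x*x)_i=\sum_{j=0}^{i}x_{i-j}x_j$ for $i=0,\dots,2m$. For nonnegative vectors $u,v$ of equal length, $\mathcal{I}(u\|v)=\sum_i\big(u_i\log\frac{u_i}{v_i}-u_i+v_i\big)$ if $u_i=0$ whenever $v_i=0$ (convention $0\log0=0$), and $+\infty$ otherwise. *)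

theory Defs
  imports Complex_Main "HOL-Library.Extended_Real"
begin

text \<open>Vectors in R^(m+1) are represented as functions nat => real; only the
  entries 0..m are used. Entries outside 0..m are treated as 0 (zero padding).\<close>

definition pad :: "nat \<Rightarrow> (nat \<Rightarrow> real) \<Rightarrow> nat \<Rightarrow> real" where
  "pad m x k = (if k \<le> m then x k else 0)"

definition conv :: "nat \<Rightarrow> (nat \<Rightarrow> real) \<Rightarrow> nat \<Rightarrow> real" where
  "conv m x i = (\<Sum>j=0..i. pad m x (i - j) * pad m x j)"

definition idiv :: "nat \<Rightarrow> (nat \<Rightarrow> real) \<Rightarrow> (nat \<Rightarrow> real) \<Rightarrow> ereal" where
  "idiv n u v =
     (if (\<forall>i<n. v i = 0 \<longrightarrow> u i = 0)
      then ereal (\<Sum>i<n. (if u i = 0 then 0 else u i * ln (u i / v i)) - u i + v i)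
      else \<infinity>)"

definition nonneg_vec :: "nat \<Rightarrow> (nat \<Rightarrow> real) \<Rightarrow> bool" where
  "nonneg_vec n u \<longleftrightarrow> (\<forall>i<n. 0 \<le> u i)"

end

theory Submission
  imports Defs
begin

text \<open>Summing the convolution over all indices gives the Cauchy product of the coefficient
  sums, i.e. the square of the total mass. Replacing \<open>x\<close> by \<open>sqrt s * x\<close> multiplies
  \<open>x * x\<close> by \<open>s\<close>, and whenever \<open>I(y \<parallel> v)\<close> is finite,
  \<open>I(y \<parallel> s v) = I(y \<parallel> v) + (s - 1) \<Sum>v - (\<Sum>y) ln s\<close>.
  A minimizer has finite divergence (compare with \<open>x = 1\<close>, whose square has no zero entry),
  so this function of \<open>s\<close> is minimal at \<open>s = 1\<close> and its derivative \<open>\<Sum>v - \<Sum>y\<close>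
  vanishes there: the minimizer reproduces the total mass of \<open>y\<close>.\<close>

lemma sum_conv_eq_square_sum:
  "(\<Sum>i=0..2*m. conv m x i) = (\<Sum>i=0..m. x i)^2"
proof -
  have "(\<Sum>i=0..2*m. conv m x i) = (\<Sum>k\<le>2*m. \<Sum>i\<le>k. pad m x i * pad m x (k - i))"
    unfolding conv_def atLeast0AtMost
    by (intro sum.cong refl) (simp add: mult.commute)
  also have "\<dots> = (\<Sum>(i,j)\<in>{(i,j). i+j \<le> 2*m}. pad m x i * pad m x j)"
    by (rule sum.triangle_reindex_eq[symmetric])
  also have "\<dots> = (\<Sum>(i,j)\<in>{..m}\<times>{..m}. pad m x i * pad m x j)"
  proof (rule sum.mono_neutral_right)
    have "{(i,j). i+j \<le> 2*m} \<subseteq> {..2*m}\<times>{..2*m}" by auto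
    then show "finite {(i::nat,j). i+j \<le> 2*m}" using finite_subset by blast
    show "{..m}\<times>{..m} \<subseteq> {(i,j). i+j \<le> 2*m}" by auto
    show "\<forall>p\<in>{(i,j). i+j \<le> 2*m} - {..m}\<times>{..m}. (case p of (i,j) \<Rightarrow> pad m x i * pad m x j) = 0"
      by (auto simp: pad_def split: if_splits)
  qed
  also have "\<dots> = (\<Sum>i\<le>m. \<Sum>j\<le>m. x i * x j)"
    by (simp add: sum.cartesian_product[symmetric] pad_def)
  also have "\<dots> = (\<Sum>i=0..m. x i)^2"
    by (simp add: power2_eq_square sum_product atLeast0AtMost)
  finally show ?thesis .
qed

lemma conv_scale: "conv m (\<lambda>k. c * x k) = (\<lambda>i. c^2 * conv m x i)"
proof -
  have "pad m (\<lambda>k. c * x k) k = c * pad m x k" for k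
    by (simp add: pad_def)
  then show ?thesis
    unfolding conv_def by (simp add: fun_eq_iff sum_distrib_left power2_eq_square algebra_simps)
qed

lemma conv_nonneg: "nonneg_vec (m+1) x \<Longrightarrow> 0 \<le> conv m x i"
  unfolding conv_def pad_def nonneg_vec_def by (intro sum_nonneg) auto

lemma conv_const_one_pos:
  assumes "i \<le> 2*m"
  shows "0 < conv m (\<lambda>_. 1) i"
proof -
  let ?j = "min i m"
  have "pad m (\<lambda>_. 1) (i - ?j) * pad m (\<lambda>_. 1) ?j = 1"
    using assms by (auto simp: pad_def)
  moreover have "pad m (\<lambda>_. 1) (i - ?j) * pad m (\<lambda>_. 1) ?j \<le> conv m (\<lambda>_. 1) i"
    unfolding conv_def by (rule member_le_sum) (auto simp: pad_def)
  ultimately show ?thesis by linarith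
qed

lemma idiv_finite_iff: "idiv n u v \<noteq> \<infinity> \<longleftrightarrow> (\<forall>i<n. v i = 0 \<longrightarrow> u i = 0)"
  by (simp add: idiv_def)

lemma idiv_scale:
  assumes y: "nonneg_vec n y" and v: "nonneg_vec n v"
    and abs_cont: "\<forall>i<n. v i = 0 \<longrightarrow> y i = 0" and s: "0 < s"
  shows "idiv n y (\<lambda>i. s * v i)
           = idiv n y v + ereal ((s - 1) * (\<Sum>i<n. v i) - (\<Sum>i<n. y i) * ln s)"
proof -
  let ?t = "\<lambda>v i. (if y i = 0 then 0 else y i * ln (y i / v i)) - y i + v i"
  have term_scale: "?t (\<lambda>i. s * v i) i = ?t v i + ((s - 1) * v i - y i * ln s)"
    if "i < n" for i
  proof (cases "y i = 0")
    case False
    then have "0 < y i" "0 < v i"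
      using y v abs_cont that by (auto simp: nonneg_vec_def order_le_less)
    then have "ln (y i / (s * v i)) = ln (y i / v i) - ln s"
      using s by (simp add: ln_div ln_mult)
    then have "y i * ln (y i / (s * v i)) = y i * ln (y i / v i) - y i * ln s"
      by (simp add: right_diff_distrib)
    then show ?thesis
      using False by (simp add: algebra_simps)
  qed (simp add: algebra_simps)
  have "idiv n y (\<lambda>i. s * v i) = ereal (\<Sum>i<n. ?t (\<lambda>i. s * v i) i)"
    using abs_cont s by (simp add: idiv_def)
  also have "\<dots> = ereal (\<Sum>i<n. ?t v i + ((s - 1) * v i - y i * ln s))"
    using term_scale by (intro arg_cong[where f=ereal] sum.cong) auto
  also have "\<dots> = ereal ((\<Sum>i<n. ?t v i) + ((s - 1) * (\<Sum>i<n. v i) - (\<Sum>i<n. y i) * ln s))"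
    by (simp only: sum.distrib sum_subtractf sum_distrib_left sum_distrib_right)
  also have "\<dots> = idiv n y v + ereal ((s - 1) * (\<Sum>i<n. v i) - (\<Sum>i<n. y i) * ln s)"
    using abs_cont by (simp add: idiv_def)
  finally show ?thesis .
qed

lemma eq_if_scale_excess_nonneg:
  fixes C Y :: real
  assumes "\<And>s. 0 < s \<Longrightarrow> 0 \<le> (s - 1) * C - Y * ln s"
  shows "C = Y"
proof -
  let ?f = "\<lambda>s. (s - 1) * C - Y * ln s"
  have deriv: "DERIV ?f 1 :> C - Y"
    by (auto intro!: derivative_eq_intros)
  have local_min: "\<forall>s. \<bar>1 - s\<bar> < 1 \<longrightarrow> ?f 1 \<le> ?f s"
    using assms by auto
  have "C - Y = 0"
    using DERIV_local_min[OF deriv zero_less_one local_min] .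
  then show ?thesis by simp
qed

lemma idiv_optimal_scale_sum_eq:
  assumes y: "nonneg_vec n y" and v: "nonneg_vec n v"
    and abs_cont: "\<forall>i<n. v i = 0 \<longrightarrow> y i = 0"
    and opt: "\<And>s. 0 < s \<Longrightarrow> idiv n y v \<le> idiv n y (\<lambda>i. s * v i)"
  shows "(\<Sum>i<n. v i) = (\<Sum>i<n. y i)"
proof (rule eq_if_scale_excess_nonneg)
  fix s :: real
  assume s: "0 < s"
  obtain r where "idiv n y v = ereal r"
    using abs_cont by (simp add: idiv_def)
  then show "0 \<le> (s - 1) * (\<Sum>i<n. v i) - (\<Sum>i<n. y i) * ln s"
    using opt[OF s] idiv_scale[OF y v abs_cont s] by simp
qed

theorem proposition2:
  fixes m :: nat
  assumes "m \<ge> 1"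
  shows "(\<forall>x :: nat \<Rightarrow> real.
            (\<Sum>i=0..2*m. conv m x i) = (\<Sum>i=0..m. x i)^2)
       \<and> (\<forall>(y :: nat \<Rightarrow> real) (xs :: nat \<Rightarrow> real).
            nonneg_vec (2*m+1) y \<and> nonneg_vec (m+1) xs \<and>
            (\<forall>x. nonneg_vec (m+1) x \<longrightarrow>
                 idiv (2*m+1) y (conv m xs) \<le> idiv (2*m+1) y (conv m x))
            \<longrightarrow> (\<Sum>i=0..2*m. conv m xs i) = (\<Sum>i=0..m. xs i)^2
              \<and> (\<Sum>i=0..m. xs i)^2 = (\<Sum>i=0..2*m. y i))"
proof (intro conjI allI impI)
  fix y xs :: "nat \<Rightarrow> real"
  assume "nonneg_vec (2*m+1) y \<and> nonneg_vec (m+1) xs \<and>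
            (\<forall>x. nonneg_vec (m+1) x \<longrightarrow>
                 idiv (2*m+1) y (conv m xs) \<le> idiv (2*m+1) y (conv m x))"
  then have y: "nonneg_vec (2*m+1) y" and xs: "nonneg_vec (m+1) xs"
    and min: "\<And>x. nonneg_vec (m+1) x \<Longrightarrow> idiv (2*m+1) y (conv m xs) \<le> idiv (2*m+1) y (conv m x)"
    by auto
  have "idiv (2*m+1) y (conv m (\<lambda>_. 1)) \<noteq> \<infinity>"
    unfolding idiv_finite_iff using conv_const_one_pos[of _ m]
    by (metis Suc_eq_plus1 less_Suc_eq_le less_irrefl)
  then have "idiv (2*m+1) y (conv m xs) \<noteq> \<infinity>"
    using min[of "\<lambda>_. 1"] ereal_infty_less_eq(1) by (metis nonneg_vec_def zero_le_one)
  then have "(\<Sum>i<2*m+1. conv m xs i) = (\<Sum>i<2*m+1. y i)"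
  proof (intro idiv_optimal_scale_sum_eq[OF y])
    show "nonneg_vec (2*m+1) (conv m xs)"
      using conv_nonneg[OF xs] by (simp add: nonneg_vec_def)
    fix s :: real
    assume "0 < s"
    then have "conv m (\<lambda>k. sqrt s * xs k) = (\<lambda>i. s * conv m xs i)"
      by (simp add: conv_scale)
    moreover have "nonneg_vec (m+1) (\<lambda>k. sqrt s * xs k)"
      using xs \<open>0 < s\<close> by (simp add: nonneg_vec_def)
    ultimately show "idiv (2*m+1) y (conv m xs) \<le> idiv (2*m+1) y (\<lambda>i. s * conv m xs i)"
      using min by metis
  qed (simp add: idiv_finite_iff)
  moreover have "{..<2*m+1} = {0..2*m}"
    by auto
  ultimately show "(\<Sum>i=0..m. xs i)^2 = (\<Sum>i=0..2*m. y i)"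
    using sum_conv_eq_square_sum[of m xs] by metis
qed (rule sum_conv_eq_square_sum)+

end
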